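(* Assume $s=d$. There exists a constant $c_1>0$ such that, with probability tending to $1$ as $n\to\infty$, $X^{(n)}$ does not contain a toroidal descending chain consisting of more than $c_1\log n$ elements.
   Context: Fix an integer $d\ge2$. For $n\ge1$, $\mathbb{T}_n$ is the torus obtained from $[-n/2,n/2]^d$ by identifying opposite faces, with toroidal distance ${\rm d}_{\mathbb{T}_n}$ and $B^{\mathbb{T}_n}_r(\xi)=\{\eta\in\mathbb{T}_n:{\rm d}_{\mathbb{T}_n}(\xi,\eta)\le r\}$. $R$ is a nonnegative random variable with absolutely continuous distribution such that $\lim_{h\to\infty}h^s\mathbb{P}(R>h)=\beta$ for some $\beta,s\in(0,\infty)$. $X^{(n)}$ is a homogeneous Poisson point process of intensity $1$ on $\mathbb{T}_n$, each point independently marked with a mark in $[0,\infty)$ distributed as $R$ (points written $(\xi,r)$). Points $x_1=(\xi_1,r_1),\dots,x_m=(\xi_m,r_m)$ form a toroidal descending chain if $r_1>r_2>\dots>r_m$ and $\xi_{i+1}\in B^{\mathbb{T}_n}_{r_i}(\xi_i)$ for all $i\in\{1,\dots,m-1\}$. *)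

theory Defs
  imports "HOL-Probability.Probability"
begin

definition torus_dist :: "real \<Rightarrow> real^'d \<Rightarrow> real^'d \<Rightarrow> real" where
  "torus_dist L x y = (INF k\<in>{k::real^'d. \<forall>i. k$i \<in> \<int>}. dist x (y + L *\<^sub>R k))"

definition torus_box :: "real \<Rightarrow> (real^'d) set" where
  "torus_box L = {x. \<forall>i. - L / 2 \<le> x$i \<and> x$i < L / 2}"

definition mark_point_law :: "real \<Rightarrow> real measure \<Rightarrow> ((real^'d) \<times> real) measure" where
  "mark_point_law L \<mu> = uniform_measure lborel (torus_box L) \<Otimes>\<^sub>M \<mu>"

text \<open>Among the k marked points f 0, ..., f (k-1) there is a toroidal descending
chain of m elements (strict decrease of marks forces distinct points).\<close>
definition has_desc_chain :: "real \<Rightarrow> (nat \<Rightarrow> (real^'d) \<times> real) \<Rightarrow> nat \<Rightarrow> nat \<Rightarrow> bool" where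
  "has_desc_chain L f k m \<longleftrightarrow>
     (\<exists>js. length js = m \<and> set js \<subseteq> {..<k} \<and>
        (\<forall>i. Suc i < m \<longrightarrow>
           snd (f (js ! Suc i)) < snd (f (js ! i)) \<and>
           torus_dist L (fst (f (js ! i))) (fst (f (js ! Suc i))) \<le> snd (f (js ! i))))"

text \<open>The process is realised in the standard way: the number of points is Poisson with
mean vol(T_n) = n^d, and given k points they are i.i.d. with law mark_point_law.\<close>
definition prob_long_chain :: "('d::finite) itself \<Rightarrow> real measure \<Rightarrow> nat \<Rightarrow> real \<Rightarrow> real" where
  "prob_long_chain _ \<mu> n c =
     (\<Sum>k. exp (- (real n ^ CARD('d))) * (real n ^ CARD('d)) ^ k / fact k *
        measure (PiM {..<k} (\<lambda>_. mark_point_law (real n) \<mu> :: ((real^'d) \<times> real) measure))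
          {f \<in> space (PiM {..<k} (\<lambda>_. mark_point_law (real n) \<mu> :: ((real^'d) \<times> real) measure)).
             \<exists>m. real m > c * ln (real n) \<and> has_desc_chain (real n) f k m})"

end

theory Submission
  imports Defs
begin

text \<open>
  A first-moment bound. Given \<open>k\<close> points, a descending chain with at least \<open>m\<^sub>0\<close> elements
  starts with a chain of \<open>m\<^sub>0\<close> distinct points whose marks decrease and in which every point is
  within sup-distance \<open>r + 1\<close> of its predecessor, \<open>r\<close> being the predecessor's mark. Integrating
  out the points from the last one backwards, such a configuration has probability at most
  \<open>\<Prod> min 1 ((6 (r + 1) / n)^d)\<close> over all but the last point; as the marks decrease, each
  \<open>m\<^sub>0\<close>-set carries only one ordering, so the expected number of such chains is at most
  \<open>(k choose m\<^sub>0) n^d E[w(R)]^m\<^sub>0\<close> with \<open>w(r) = max (min 1 ((6 (r + 1) / n)^d)) n^-d\<close>.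
  Splitting the tail \<open>P(R > h) \<sim> \<beta> h^-d\<close> dyadically gives \<open>E[w(R)] = O(log n / n^d)\<close>; this is
  where \<open>s = d\<close> is used. Averaging over the Poisson number of points turns
  \<open>(k choose m\<^sub>0)\<close> into \<open>n^(d m\<^sub>0) / m\<^sub>0!\<close>, so the probability is at most
  \<open>n^d (K + B log n)^m\<^sub>0 / m\<^sub>0!\<close>, which is below \<open>1/n\<close> once \<open>m\<^sub>0 > c log n\<close> for large \<open>c\<close>.
\<close>

lemma borel_measurable_vec_nth[measurable (raw)]:
  "f \<in> borel_measurable M \<Longrightarrow> (\<lambda>x. (f x :: real^'d::finite) $ i) \<in> borel_measurable M"
  by (rule measurable_compose[OF _ borel_measurable_nth])

lemma pred_successively:
  assumes "\<And>i j. i \<in> set js \<Longrightarrow> j \<in> set js \<Longrightarrow> Measurable.pred M (\<lambda>x. R x i j)"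
  shows "Measurable.pred M (\<lambda>x. successively (R x) js)"
  using assms
proof (induction js rule: induct_list012)
  case (3 i j js)
  then show ?case by (simp add: pred_intros_logic)
qed simp_all

lemma borel_measurable_prod_list_ennreal:
  assumes "\<And>i. i \<in> set xs \<Longrightarrow> (\<lambda>x. F x i) \<in> borel_measurable M"
  shows "(\<lambda>x. \<Prod>i\<leftarrow>xs. F x i :: ennreal) \<in> borel_measurable M"
  using assms by (induction xs) (simp_all add: borel_measurable_times_ennreal)

lemma emeasure_Collect_eq_nn_integral_of_bool:
  assumes "{x \<in> space M. P x} \<in> sets M"
  shows "emeasure M {x \<in> space M. P x} = (\<integral>\<^sup>+x. of_bool (P x) \<partial>M)"
proof -
  have "(\<integral>\<^sup>+x. of_bool (P x) \<partial>M) = (\<integral>\<^sup>+x. indicator {x \<in> space M. P x} x \<partial>M)"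
    by (intro nn_integral_cong) (simp add: indicator_def)
  with assms show ?thesis by simp
qed

lemma poisson_binomial_moment_sums:
  fixes lam :: real
  shows "(\<lambda>k. exp (- lam) * lam ^ k / fact k * real (k choose m)) sums (lam ^ m / fact m)"
proof -
  have "(\<lambda>i. lam ^ i / fact i) sums exp lam"
    using exp_converges[of lam] by (simp add: divide_inverse_commute scaleR_conv_of_real)
  then have sums: "(\<lambda>i. (exp (- lam) * lam ^ m / fact m) * (lam ^ i / fact i)) sums ((exp (- lam) * lam ^ m / fact m) * exp lam)"
    by (rule sums_mult)
  have shifted: "(exp (- lam) * lam ^ m / fact m) * (lam ^ i / fact i)
      = exp (- lam) * lam ^ (i + m) / fact (i + m) * real ((i + m) choose m)" for i
    by (simp add: binomial_fact field_simps power_add)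
  have total: "(exp (- lam) * lam ^ m / fact m) * exp lam = lam ^ m / fact m"
    by (simp add: exp_minus field_simps)
  have "(\<lambda>i. exp (- lam) * lam ^ (i + m) / fact (i + m) * real ((i + m) choose m)) sums (lam ^ m / fact m)"
    using sums by (simp only: shifted total)
  then show ?thesis
    by (subst sums_zero_iff_shift[symmetric, of m]) (auto simp: binomial_eq_0)
qed

lemma tail_le_of_tendsto:
  fixes \<mu> :: "real measure" and \<beta> :: real and d :: nat
  assumes "((\<lambda>h. h powr real d * measure \<mu> {h<..}) \<longlongrightarrow> \<beta>) at_top"
  obtains h0 where "h0 \<ge> 1" and "\<And>h. h \<ge> h0 \<Longrightarrow> measure \<mu> {h<..} \<le> (\<bar>\<beta>\<bar> + 1) / h^d"
proof -
  have "eventually (\<lambda>h. h powr real d * measure \<mu> {h<..} < \<beta> + 1) at_top"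
    using order_tendstoD(2)[OF assms, of "\<beta> + 1"] by simp
  then obtain h1 where h1: "\<And>h. h \<ge> h1 \<Longrightarrow> h powr real d * measure \<mu> {h<..} < \<beta> + 1"
    by (auto simp: eventually_at_top_linorder)
  show ?thesis
  proof (rule that[of "max 1 h1"])
    fix h assume h: "h \<ge> max 1 h1"
    then have "h^d * measure \<mu> {h<..} \<le> \<bar>\<beta>\<bar> + 1"
      using h1[of h] by (simp add: powr_realpow)
    then show "measure \<mu> {h<..} \<le> (\<bar>\<beta>\<bar> + 1) / h^d"
      using h by (simp add: field_simps)
  qed simp
qed

lemma ceiling_log2_bounds:
  fixes L :: real
  assumes "L \<ge> 1"
  shows "L \<le> 2 ^ nat \<lceil>log 2 L\<rceil>" and "real (Suc (nat \<lceil>log 2 L\<rceil>)) \<le> ln L / ln 2 + 2"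
proof -
  have lg: "log 2 L \<ge> 0" using assms by simp
  have "L = 2 powr (log 2 L)" using assms by simp
  also have "\<dots> \<le> 2 powr (real (nat \<lceil>log 2 L\<rceil>))" using lg by (intro powr_mono) linarith+
  also have "\<dots> = 2 ^ nat \<lceil>log 2 L\<rceil>" by (simp add: powr_realpow)
  finally show "L \<le> 2 ^ nat \<lceil>log 2 L\<rceil>" .
  have "real (nat \<lceil>log 2 L\<rceil>) \<le> log 2 L + 1" using lg by linarith
  then show "real (Suc (nat \<lceil>log 2 L\<rceil>)) \<le> ln L / ln 2 + 2" by (simp add: log_def)
qed

lemma power_div_fact_le_exp:
  fixes y :: real
  assumes "y \<ge> 0"
  shows "y ^ m / fact m \<le> exp y"
proof -
  have S: "(\<lambda>i. y ^ i / fact i) sums exp y"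
    using exp_converges[of y] by (simp add: divide_inverse_commute scaleR_conv_of_real)
  have "y ^ m / fact m \<le> (\<Sum>i<Suc m. y ^ i / fact i)"
    by (rule member_le_sum) (use assms in auto)
  also have "\<dots> \<le> exp y"
    using sum_le_suminf[OF sums_summable[OF S], of "{..<Suc m}"] sums_unique[OF S] assms by auto
  finally show ?thesis .
qed

lemma power_div_fact_le_exp_div_power:
  fixes q :: real
  assumes "0 \<le> q"
  shows "q ^ m / fact m \<le> (exp 1 * q / real m) ^ m"
proof (cases "m = 0")
  case False
  have "q ^ m / fact m = (q / real m) ^ m * (real m ^ m / fact m)"
    using False by (simp add: power_divide)
  also have "\<dots> \<le> (q / real m) ^ m * exp (real m)"
    using assms by (intro mult_left_mono power_div_fact_le_exp) auto
  also have "\<dots> = (exp 1 * q / real m) ^ m"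
    by (simp add: power_mult_distrib power_divide exp_of_nat_mult[symmetric] mult.commute)
  finally show ?thesis .
qed simp

text \<open>The choice of \<open>c\<close> makes the base \<open>e (K + B x) / m\<close> at most \<open>e^-(d+1)\<close>.\<close>
lemma poly_log_power_div_fact_le:
  fixes K B c x :: real and d m :: nat
  assumes B: "B > 0" and x: "x \<ge> \<bar>K\<bar> / B + 1"
    and c: "c \<ge> 1" "c \<ge> 2 * exp 1 * B * exp (real d + 1)" and m: "real m \<ge> c * x"
  shows "(K + B * x) ^ m / fact m \<le> exp (- (real d + 1) * x)"
proof -
  have x1: "x \<ge> 1" using x B by (smt (verit) divide_nonneg_pos abs_ge_zero)
  have "\<bar>K\<bar> \<le> B * x" using x B by (simp add: field_simps)
  then have q: "0 \<le> K + B * x" "K + B * x \<le> 2 * B * x" by auto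
  have "x \<le> c * x" using c(1) x1 by simp
  then have mx: "x \<le> real m" using m by linarith
  then have m0: "real m > 0" using x1 by simp
  have "(K + B * x) ^ m / fact m \<le> (exp 1 * (K + B * x) / real m) ^ m"
    using q(1) by (rule power_div_fact_le_exp_div_power)
  also have "\<dots> \<le> exp (- (real d + 1)) ^ m"
  proof (rule power_mono)
    have "exp 1 * (K + B * x) / real m \<le> exp 1 * (2 * B * x) / (c * x)"
      using q m0 m x1 c by (intro frac_le) (auto intro!: mult_left_mono)
    also have "\<dots> = 2 * exp 1 * B / c" using x1 by (simp add: field_simps)
    also have "\<dots> \<le> exp (- (real d + 1))"
    proof -
      have "2 * exp 1 * B = (2 * exp 1 * B * exp (real d + 1)) * exp (- (real d + 1))"
        by (simp add: mult.assoc flip: exp_add)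
      also have "\<dots> \<le> c * exp (- (real d + 1))" using c(2) by (intro mult_right_mono) simp_all
      finally show ?thesis using c(1) by (simp add: divide_le_eq mult.commute)
    qed
    finally show "exp 1 * (K + B * x) / real m \<le> exp (- (real d + 1))" .
  qed (use q m0 in auto)
  also have "\<dots> = exp (- (real d + 1) * real m)"
    by (simp add: exp_of_nat_mult[symmetric] mult.commute)
  also have "\<dots> \<le> exp (- (real d + 1) * x)"
    using mx by (intro exp_mono) (simp add: mult_left_mono)
  finally show ?thesis .
qed

lemma eventually_poly_log_power_div_fact_le:
  fixes K B :: real and d :: nat
  assumes B: "B > 0"
  shows "\<exists>c>0. \<forall>\<^sub>F n in sequentially. \<forall>m::nat. real m > c * ln (real n) \<longrightarrow>
    real n ^ d * (K + B * ln (real n)) ^ m / fact m \<le> 1 / real n"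
proof -
  define c where "c = max 1 (2 * exp 1 * B * exp (real d + 1))"
  obtain N :: nat where N: "real N \<ge> exp (\<bar>K\<bar> / B + 1)" using real_arch_simple by blast
  have "real n ^ d * (K + B * ln (real n)) ^ m / fact m \<le> 1 / real n"
    if n: "n \<ge> N" and m: "real m > c * ln (real n)" for n m
  proof -
    have exp_le: "exp (\<bar>K\<bar> / B + 1) \<le> real n" using N n by (meson of_nat_le_iff order.trans)
    then have n_pos: "real n > 0" by (meson exp_gt_zero less_le_trans)
    have "ln (real n) \<ge> \<bar>K\<bar> / B + 1"
      using exp_le n_pos by (simp add: ln_ge_iff)
    moreover have "c \<ge> 1" "c \<ge> 2 * exp 1 * B * exp (real d + 1)" by (simp_all add: c_def)
    ultimately have "(K + B * ln (real n)) ^ m / fact m \<le> exp (- (real d + 1) * ln (real n))"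
      using less_imp_le[OF m] B by (intro poly_log_power_div_fact_le) simp_all
    also have "\<dots> = 1 / real n ^ Suc d"
    proof -
      have "exp (real (Suc d) * ln (real n)) = real n ^ Suc d"
        by (simp only: exp_of_nat_mult exp_ln[OF n_pos])
      moreover have "- (real d + 1) * ln (real n) = - (real (Suc d) * ln (real n))" by (simp add: algebra_simps)
      ultimately show ?thesis by (simp add: exp_minus inverse_eq_divide)
    qed
    finally have "real n ^ d * ((K + B * ln (real n)) ^ m / fact m) \<le> real n ^ d * (1 / real n ^ Suc d)"
      using n_pos by (intro mult_left_mono) auto
    then show ?thesis using n_pos by (simp add: field_simps)
  qed
  moreover have "c > 0" by (simp add: c_def)
  ultimately show ?thesis by (auto simp: eventually_sequentially)
qed

lemma nat_floor_Suc_least_above: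
  fixes x :: real
  assumes "0 \<le> x"
  shows "x < real (nat \<lfloor>x\<rfloor> + 1)" and "\<And>m. x < real m \<Longrightarrow> nat \<lfloor>x\<rfloor> + 1 \<le> m"
proof -
  show "x < real (nat \<lfloor>x\<rfloor> + 1)" using assms by linarith
  fix m assume "x < real m"
  then have "\<lfloor>x\<rfloor> < int m" by linarith
  then have "nat \<lfloor>x\<rfloor> < m" using assms by (simp add: nat_less_iff)
  then show "nat \<lfloor>x\<rfloor> + 1 \<le> m" by simp
qed

section \<open>Neighbourhoods on the torus\<close>

lemma emeasure_cbox_cart:
  fixes a b :: "real^'d::finite"
  assumes "\<And>i. a$i \<le> b$i"
  shows "emeasure lborel (cbox a b) = ennreal (\<Prod>i\<in>UNIV. b$i - a$i)"
proof -
  have "cbox a b \<noteq> {}" using assms by (simp add: interval_ne_empty_cart)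
  then show ?thesis
    using emeasure_lborel_cbox_finite[of a b]
    by (simp add: emeasure_eq_ennreal_measure content_cbox_cart)
qed

lemma sets_torus_box[measurable]: "torus_box L \<in> sets (borel :: (real^'d::finite) measure)"
  unfolding torus_box_def by measurable

lemma emeasure_torus_box:
  assumes "L > 0"
  shows "emeasure lborel (torus_box L :: (real^'d::finite) set) = ennreal (L ^ CARD('d))"
proof -
  let ?a = "(\<chi> i. - L/2) :: real^'d" and ?b = "(\<chi> i. L/2) :: real^'d"
  have "box ?a ?b \<subseteq> torus_box L" and "torus_box L \<subseteq> cbox ?a ?b"
    by (auto simp: torus_box_def mem_box_cart less_imp_le)
  then have "emeasure lborel (box ?a ?b) \<le> emeasure lborel (torus_box L :: (real^'d) set)"
    and "emeasure lborel (torus_box L :: (real^'d) set) \<le> emeasure lborel (cbox ?a ?b)"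
    by (auto intro!: emeasure_mono simp del: emeasure_lborel_box emeasure_lborel_cbox)
  moreover have "emeasure lborel (box ?a ?b) = emeasure lborel (cbox ?a ?b)"
    by (simp add: emeasure_lborel_box_eq emeasure_lborel_cbox_eq)
  moreover have "emeasure lborel (cbox ?a ?b) = ennreal (L ^ CARD('d))"
    using assms by (simp add: emeasure_cbox_cart)
  ultimately show ?thesis by simp
qed

lemma prob_space_uniform_torus_box:
  assumes "L > 0"
  shows "prob_space (uniform_measure lborel (torus_box L :: (real^'d::finite) set))"
  using assms by (intro prob_space_uniform_measure) (auto simp: emeasure_torus_box)

definition torus_near :: "real \<Rightarrow> real^'d::finite \<Rightarrow> real^'d \<Rightarrow> real \<Rightarrow> bool" where
  "torus_near L x y \<rho> \<longleftrightarrow> (\<forall>i. \<exists>j::int. \<bar>x$i - y$i - L * of_int j\<bar> \<le> \<rho>)"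

lemma pred_torus_near[measurable]:
  assumes [measurable]: "f \<in> borel_measurable M" "g \<in> borel_measurable M" "h \<in> borel_measurable M"
  shows "Measurable.pred M (\<lambda>\<omega>. torus_near L (f \<omega>) (g \<omega>) (h \<omega>))"
proof -
  have "Measurable.pred M (\<lambda>\<omega>. \<forall>i\<in>UNIV. \<exists>j::int. \<bar>f \<omega> $ i - g \<omega> $ i - L * of_int j\<bar> \<le> h \<omega>)"
    by measurable
  then show ?thesis unfolding torus_near_def by simp
qed

lemma sets_torus_near[measurable]: "{y. torus_near L a y \<rho>} \<in> sets (borel :: (real^'d::finite) measure)"
  by measurable

lemma torus_dist_le_imp_near:
  fixes x y :: "real^'d::finite"
  assumes "torus_dist L x y \<le> r"
  shows "torus_near L x y (r + 1)"
proof -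
  let ?K = "{k::real^'d. \<forall>i. k$i \<in> \<int>}"
  have "(0::real^'d) \<in> ?K" by simp
  then have ne: "(\<lambda>k. dist x (y + L *\<^sub>R k)) ` ?K \<noteq> {}" by blast
  have "Inf ((\<lambda>k. dist x (y + L *\<^sub>R k)) ` ?K) < r + 1"
    using assms unfolding torus_dist_def by simp
  then obtain k where k: "k \<in> ?K" "dist x (y + L *\<^sub>R k) < r + 1"
    using cInf_lessD[OF ne] by blast
  show ?thesis unfolding torus_near_def
  proof
    fix i
    obtain j where j: "k$i = of_int j" using k(1) by (auto elim: Ints_cases)
    have "\<bar>(x - (y + L *\<^sub>R k))$i\<bar> \<le> norm (x - (y + L *\<^sub>R k))"
      by (rule component_le_norm_cart)
    then have "\<bar>x$i - y$i - L * of_int j\<bar> \<le> r + 1"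
      using k(2) j by (simp add: dist_norm algebra_simps)
    then show "\<exists>j::int. \<bar>x$i - y$i - L * of_int j\<bar> \<le> r + 1" by blast
  qed
qed

text \<open>Each coordinate of a point of the fundamental domain lies within \<open>\<rho>\<close> of at most three
  consecutive lattice translates of the corresponding coordinate of \<open>a\<close>.\<close>
lemma torus_box_near_subset:
  fixes a :: "real^'d::finite"
  assumes L: "L > 0" and \<rho>: "2*\<rho> \<le> L"
  defines "c \<equiv> \<lambda>\<kappa>. \<chi> i. a$i - L * of_int (\<lceil>(a$i - L/2 - \<rho>)/L\<rceil> + \<kappa> i)"
  shows "torus_box L \<inter> {y. torus_near L a y \<rho>}
    \<subseteq> (\<Union>\<kappa>\<in>UNIV \<rightarrow>\<^sub>E {0,1,2::int}. cbox (\<chi> i. c \<kappa> $ i - \<rho>) (\<chi> i. c \<kappa> $ i + \<rho>))"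
proof
  fix y assume y: "y \<in> torus_box L \<inter> {y. torus_near L a y \<rho>}"
  define j0 where "j0 i = \<lceil>(a$i - L/2 - \<rho>)/L\<rceil>" for i
  have "\<forall>i. \<exists>j::int. \<bar>a$i - y$i - L * of_int j\<bar> \<le> \<rho>"
    using y by (auto simp: torus_near_def)
  then obtain J where J: "\<And>i. \<bar>a$i - y$i - L * of_int (J i)\<bar> \<le> \<rho>" by metis
  have yb: "- L/2 \<le> y$i" "y$i < L/2" for i using y by (auto simp: torus_box_def)
  have "j0 i \<le> J i" for i
  proof -
    have "L * of_int (J i) > a$i - L/2 - \<rho>" using J[of i] yb[of i] by (auto simp: abs_le_iff)
    then have "of_int (J i) > (a$i - L/2 - \<rho>)/L" using L by (simp add: field_simps)
    then show ?thesis unfolding j0_def by (simp add: ceiling_le_iff less_imp_le)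
  qed
  moreover have "J i \<le> j0 i + 2" for i
  proof -
    have "L * of_int (J i) \<le> a$i + L/2 + \<rho>" using J[of i] yb[of i] by (auto simp: abs_le_iff)
    then have "of_int (J i) \<le> (a$i - L/2 - \<rho>)/L + 2" using L \<rho> by (simp add: field_simps)
    moreover have "(a$i - L/2 - \<rho>)/L \<le> of_int (j0 i)" unfolding j0_def by simp
    ultimately show ?thesis by linarith
  qed
  ultimately have "(\<lambda>i. J i - j0 i) \<in> UNIV \<rightarrow>\<^sub>E {0,1,2::int}"
    by (auto simp: PiE_def extensional_def) (smt (verit))
  moreover have "c (\<lambda>i. J i - j0 i) $ i - \<rho> \<le> y$i \<and> y$i \<le> c (\<lambda>i. J i - j0 i) $ i + \<rho>" for i
    using J[of i] unfolding c_def j0_def by (simp add: abs_le_iff algebra_simps)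
  then have "y \<in> cbox (\<chi> i. c (\<lambda>i. J i - j0 i) $ i - \<rho>) (\<chi> i. c (\<lambda>i. J i - j0 i) $ i + \<rho>)"
    by (simp add: mem_box_cart)
  ultimately show "y \<in> (\<Union>\<kappa>\<in>UNIV \<rightarrow>\<^sub>E {0,1,2::int}. cbox (\<chi> i. c \<kappa> $ i - \<rho>) (\<chi> i. c \<kappa> $ i + \<rho>))"
    by blast
qed

lemma emeasure_torus_box_near_le:
  fixes a :: "real^'d::finite"
  assumes "L > 0" and "0 \<le> \<rho>" and "2*\<rho> \<le> L"
  shows "emeasure lborel (torus_box L \<inter> {y. torus_near L a y \<rho>}) \<le> ennreal ((6*\<rho>)^CARD('d))"
proof -
  define K where "K = (UNIV::'d set) \<rightarrow>\<^sub>E {0,1,2::int}"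
  define B where "B \<kappa> = cbox (\<chi> i. a$i - L * of_int (\<lceil>(a$i - L/2 - \<rho>)/L\<rceil> + \<kappa> i) - \<rho>)
    ((\<chi> i. a$i - L * of_int (\<lceil>(a$i - L/2 - \<rho>)/L\<rceil> + \<kappa> i) + \<rho>) :: real^'d)" for \<kappa>
  have "finite K" unfolding K_def by (intro finite_PiE) auto
  have "emeasure lborel (torus_box L \<inter> {y. torus_near L a y \<rho>}) \<le> emeasure lborel (\<Union>\<kappa>\<in>K. B \<kappa>)"
    using torus_box_near_subset[OF assms(1,3), of a]
    by (intro emeasure_mono) (auto simp: K_def B_def)
  also have "\<dots> \<le> (\<Sum>\<kappa>\<in>K. emeasure lborel (B \<kappa>))"
    using \<open>finite K\<close> by (intro emeasure_subadditive_finite) (auto simp: B_def)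
  also have "\<dots> = (\<Sum>\<kappa>\<in>K. ennreal ((2*\<rho>)^CARD('d)))"
    using assms(2) by (intro sum.cong refl) (simp add: B_def emeasure_cbox_cart)
  also have "\<dots> = ennreal ((6*\<rho>)^CARD('d))"
    using assms(2) by (simp add: K_def card_PiE ennreal_of_nat_eq_real_of_nat ennreal_mult'[symmetric]
        power_mult_distrib flip: power_mult_distrib[of "3::real" 2])
  finally show ?thesis .
qed

definition near_prob :: "nat \<Rightarrow> real \<Rightarrow> real \<Rightarrow> real" where
  "near_prob d L \<rho> = min 1 ((6*\<rho>/L)^d)"

lemma borel_measurable_near_prob[measurable]: "near_prob d L \<in> borel_measurable borel"
  unfolding near_prob_def by measurable

locale marked_torus =
  fixes L :: real and \<mu> :: "real measure"
  assumes L_pos: "L > 0"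
    and prob_space_marks: "prob_space \<mu>"
    and sets_marks[measurable_cong]: "sets \<mu> = sets borel"
begin

abbreviation torus_unif :: "(real^'d::finite) measure" where
  "torus_unif \<equiv> uniform_measure lborel (torus_box L)"

abbreviation point_law :: "((real^'d::finite) \<times> real) measure" where
  "point_law \<equiv> mark_point_law L \<mu>"

lemma prob_space_torus_unif: "prob_space (torus_unif :: (real^'d::finite) measure)"
  using prob_space_uniform_torus_box[OF L_pos] .

lemma prob_space_point_law: "prob_space (point_law :: ((real^'d::finite) \<times> real) measure)"
  unfolding mark_point_law_def by (intro prob_space_pair prob_space_torus_unif prob_space_marks)

lemma sets_point_law[measurable_cong]:
  "sets (point_law :: ((real^'d::finite) \<times> real) measure) = sets (borel \<Otimes>\<^sub>M borel)"
  unfolding mark_point_law_def by (intro sets_pair_measure_cong) (simp_all add: sets_marks)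

lemma emeasure_torus_unif_near_le:
  fixes a :: "real^'d::finite"
  shows "emeasure torus_unif {y. torus_near L a y \<rho>} \<le> ennreal (near_prob CARD('d) L \<rho>)"
proof -
  interpret U: prob_space "torus_unif :: (real^'d) measure" by (rule prob_space_torus_unif)
  have le1: "emeasure torus_unif {y. torus_near L a y \<rho>} \<le> 1" by (rule U.emeasure_le_1)
  consider "\<rho> < 0" | "0 \<le> \<rho>" "2*\<rho> \<le> L" | "L < 2*\<rho>" by linarith
  then show ?thesis
  proof cases
    case 1
    then have "{y. torus_near L a y \<rho>} = {}" by (auto simp: torus_near_def)
    then show ?thesis by simp
  next
    case 2
    have "emeasure torus_unif {y. torus_near L a y \<rho>}
        = emeasure lborel (torus_box L \<inter> {y. torus_near L a y \<rho>}) / emeasure lborel (torus_box L :: (real^'d) set)"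
      by (subst emeasure_uniform_measure) (auto simp: Int_commute)
    also have "\<dots> \<le> ennreal ((6*\<rho>)^CARD('d)) / ennreal (L^CARD('d))"
      unfolding emeasure_torus_box[OF L_pos]
      by (intro divide_right_mono_ennreal emeasure_torus_box_near_le L_pos 2)
    also have "\<dots> = ennreal ((6*\<rho>/L)^CARD('d))"
      using L_pos 2 by (simp add: divide_ennreal power_divide)
    finally show ?thesis
      using le1 unfolding near_prob_def by (simp add: min_def)
  next
    case 3
    then have "1 \<le> (6*\<rho>/L)^CARD('d)"
      using L_pos by (intro one_le_power) (simp add: field_simps)
    then show ?thesis using le1 by (simp add: near_prob_def)
  qed
qed

lemma nn_integral_point_law_split:
  assumes [measurable]: "F \<in> borel_measurable borel" "G \<in> borel_measurable borel"
  shows "(\<integral>\<^sup>+p. F (fst p) * G (snd p) \<partial>(point_law :: ((real^'d::finite) \<times> real) measure))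
    = (\<integral>\<^sup>+x. F x \<partial>torus_unif) * (\<integral>\<^sup>+t. G t \<partial>\<mu>)"
proof -
  interpret marks: prob_space \<mu> by (rule prob_space_marks)
  have "(\<lambda>p. F (fst p) * G (snd p)) \<in> borel_measurable (torus_unif \<Otimes>\<^sub>M \<mu>)"
    by measurable
  note fst_integral = marks.nn_integral_fst[OF this]
  have "(\<integral>\<^sup>+p. F (fst p) * G (snd p) \<partial>point_law) = (\<integral>\<^sup>+x. \<integral>\<^sup>+t. F x * G t \<partial>\<mu> \<partial>torus_unif)"
    unfolding mark_point_law_def using fst_integral by simp
  also have "\<dots> = (\<integral>\<^sup>+x. F x * (\<integral>\<^sup>+t. G t \<partial>\<mu>) \<partial>torus_unif)"
    by (simp add: nn_integral_cmult)
  also have "\<dots> = (\<integral>\<^sup>+x. F x \<partial>torus_unif) * (\<integral>\<^sup>+t. G t \<partial>\<mu>)"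
    by (rule nn_integral_multc) measurable
  finally show ?thesis .
qed

lemma nn_integral_point_law_mark:
  assumes "G \<in> borel_measurable borel"
  shows "(\<integral>\<^sup>+p. G (snd p) \<partial>(point_law :: ((real^'d::finite) \<times> real) measure)) = (\<integral>\<^sup>+t. G t \<partial>\<mu>)"
proof -
  interpret U: prob_space "torus_unif :: (real^'d) measure" by (rule prob_space_torus_unif)
  have "(\<integral>\<^sup>+x. 1 \<partial>(torus_unif :: (real^'d) measure)) = 1"
    by (simp only: nn_integral_const U.emeasure_space_1) simp
  then show ?thesis
    using nn_integral_point_law_split[of "\<lambda>_::real^'d. 1" G] assms by simp
qed

lemma nn_integral_point_law_near_le:
  fixes a :: "real^'d::finite"
  assumes "G \<in> borel_measurable borel"
  shows "(\<integral>\<^sup>+p. indicator {y. torus_near L a y \<rho>} (fst p) * G (snd p) \<partial>point_law)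
    \<le> ennreal (near_prob CARD('d) L \<rho>) * (\<integral>\<^sup>+t. G t \<partial>\<mu>)"
proof -
  have "(\<integral>\<^sup>+x. indicator {y. torus_near L a y \<rho>} x \<partial>torus_unif) = emeasure torus_unif {y. torus_near L a y \<rho>}"
    by (intro nn_integral_indicator) simp
  then show ?thesis
    using assms emeasure_torus_unif_near_le[of a \<rho>]
    by (simp only: nn_integral_point_law_split borel_measurable_indicator sets_torus_near) (simp add: mult_right_mono)
qed

end


section \<open>Near chains\<close>

text \<open>The slack \<open>+ 1\<close> absorbs the infimum in \<open>torus_dist\<close>, which is not a priori attained.\<close>
definition near_chain :: "real \<Rightarrow> (nat \<Rightarrow> (real^'d::finite) \<times> real) \<Rightarrow> nat list \<Rightarrow> bool" where
  "near_chain L f =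
     successively (\<lambda>i j. snd (f j) < snd (f i) \<and> torus_near L (fst (f i)) (fst (f j)) (snd (f i) + 1))"

definition desc_marks :: "(nat \<Rightarrow> 'a \<times> real) \<Rightarrow> nat list \<Rightarrow> bool" where
  "desc_marks f = successively (\<lambda>i j. snd (f j) < snd (f i))"

definition chain_weight :: "real \<Rightarrow> (nat \<Rightarrow> (real^'d::finite) \<times> real) \<Rightarrow> nat list \<Rightarrow> ennreal" where
  "chain_weight L f js = (\<Prod>i\<leftarrow>butlast js. ennreal (near_prob CARD('d) L (snd (f i) + 1)))"

lemma near_chain_imp_desc_marks: "near_chain L f js \<Longrightarrow> desc_marks f js"
  unfolding near_chain_def desc_marks_def by (auto elim: successively_mono)

lemma near_chain_cong: "(\<And>i. i \<in> set js \<Longrightarrow> f i = g i) \<Longrightarrow> near_chain L f js = near_chain L g js"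
  unfolding near_chain_def by (intro successively_cong) auto

lemma desc_marks_cong: "(\<And>i. i \<in> set js \<Longrightarrow> f i = g i) \<Longrightarrow> desc_marks f js = desc_marks g js"
  unfolding desc_marks_def by (intro successively_cong) auto

lemma chain_weight_cong: "(\<And>i. i \<in> set js \<Longrightarrow> f i = g i) \<Longrightarrow> chain_weight L f js = chain_weight L g js"
  unfolding chain_weight_def by (intro arg_cong[where f=prod_list] map_cong) (auto dest: in_set_butlastD)

lemma near_chain_snoc:
  "bl \<noteq> [] \<Longrightarrow> near_chain L f (bl @ [j]) \<longleftrightarrow> near_chain L f bl \<and>
     snd (f j) < snd (f (last bl)) \<and> torus_near L (fst (f (last bl))) (fst (f j)) (snd (f (last bl)) + 1)"
  by (simp add: near_chain_def successively_append_iff)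

lemma desc_marks_snoc:
  "bl \<noteq> [] \<Longrightarrow> desc_marks f (bl @ [j]) \<longleftrightarrow> desc_marks f bl \<and> snd (f j) < snd (f (last bl))"
  by (simp add: desc_marks_def successively_append_iff)

lemma chain_weight_snoc:
  fixes f :: "nat \<Rightarrow> (real^'d::finite) \<times> real"
  assumes "bl \<noteq> []"
  shows "chain_weight L f (bl @ [j]) = chain_weight L f bl * ennreal (near_prob CARD('d) L (snd (f (last bl)) + 1))"
  using assms by (cases bl rule: rev_cases) (simp_all add: chain_weight_def butlast_append)

context marked_torus
begin

lemma pred_near_chain[measurable]:
  "set js \<subseteq> I \<Longrightarrow> Measurable.pred (PiM I (\<lambda>_. point_law)) (\<lambda>f. near_chain L f js)"
  unfolding near_chain_def
proof (rule pred_successively)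
  fix i j assume "set js \<subseteq> I" "i \<in> set js" "j \<in> set js"
  then have "i \<in> I" "j \<in> I" by auto
  note [measurable] = measurable_component_singleton[OF this(1), of "\<lambda>_. borel \<Otimes>\<^sub>M borel"]
    measurable_component_singleton[OF this(2), of "\<lambda>_. borel \<Otimes>\<^sub>M borel"]
  show "Measurable.pred (PiM I (\<lambda>_. point_law :: ((real^'d) \<times> real) measure))
      (\<lambda>f. snd (f j) < snd (f i) \<and> torus_near L (fst (f i)) (fst (f j)) (snd (f i) + 1))"
    by measurable
qed

lemma pred_desc_marks[measurable]:
  "set js \<subseteq> I \<Longrightarrow> Measurable.pred (PiM I (\<lambda>_. point_law :: ((real^'d::finite) \<times> real) measure)) (\<lambda>f. desc_marks f js)"
  unfolding desc_marks_def
proof (rule pred_successively)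
  fix i j assume "set js \<subseteq> I" "i \<in> set js" "j \<in> set js"
  then have "i \<in> I" "j \<in> I" by auto
  note [measurable] = measurable_component_singleton[OF this(1), of "\<lambda>_. borel \<Otimes>\<^sub>M borel"]
    measurable_component_singleton[OF this(2), of "\<lambda>_. borel \<Otimes>\<^sub>M borel"]
  show "Measurable.pred (PiM I (\<lambda>_. point_law :: ((real^'d) \<times> real) measure)) (\<lambda>f. snd (f j) < snd (f i))"
    by measurable
qed

lemma borel_measurable_chain_weight[measurable]:
  "set js \<subseteq> I \<Longrightarrow> (\<lambda>f. chain_weight L f js) \<in> borel_measurable (PiM I (\<lambda>_. point_law :: ((real^'d::finite) \<times> real) measure))"
  unfolding chain_weight_def
proof (rule borel_measurable_prod_list_ennreal)
  fix i assume "set js \<subseteq> I" "i \<in> set (butlast js)"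
  then have "i \<in> I" by (auto dest: in_set_butlastD)
  note [measurable] = measurable_component_singleton[OF this, of "\<lambda>_. borel \<Otimes>\<^sub>M borel"]
  show "(\<lambda>f. ennreal (near_prob CARD('d) L (snd (f i) + 1)))
      \<in> borel_measurable (PiM I (\<lambda>_. point_law :: ((real^'d) \<times> real) measure))"
    by measurable
qed

definition marks_below_integral :: "(real \<Rightarrow> ennreal) \<Rightarrow> real \<Rightarrow> ennreal" where
  "marks_below_integral \<phi> r = (\<integral>\<^sup>+t. of_bool (t < r) * \<phi> t \<partial>\<mu>)"

lemma borel_measurable_marks_below_integral:
  assumes [measurable]: "\<phi> \<in> borel_measurable borel"
  shows "marks_below_integral \<phi> \<in> borel_measurable borel"
proof -
  interpret marks: prob_space \<mu> by (rule prob_space_marks)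
  have "(\<lambda>(r, t). of_bool (t < r) * \<phi> t) \<in> borel_measurable (borel \<Otimes>\<^sub>M \<mu>)"
    by measurable
  then show ?thesis
    unfolding marks_below_integral_def by (rule marks.borel_measurable_nn_integral)
qed

lemma nn_integral_near_chain_snoc_le:
  fixes x :: "nat \<Rightarrow> (real^'d::finite) \<times> real"
  assumes bl: "bl \<noteq> []" "j \<notin> set bl" and [measurable]: "\<phi> \<in> borel_measurable borel"
  defines "r \<equiv> snd (x (last bl))"
  shows "(\<integral>\<^sup>+y. of_bool (near_chain L (x(j := y)) (bl @ [j])) * \<phi> (snd y) \<partial>point_law)
    \<le> of_bool (near_chain L x bl) * (ennreal (near_prob CARD('d) L (r + 1)) * marks_below_integral \<phi> r)"
proof -
  define A where "A = {u. torus_near L (fst (x (last bl))) u (r + 1)}"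
  have "last bl \<noteq> j" using bl by auto
  moreover have "near_chain L (x(j := y)) bl = near_chain L x bl" for y
    by (rule near_chain_cong) (use bl(2) in auto)
  ultimately have "of_bool (near_chain L (x(j := y)) (bl @ [j])) * \<phi> (snd y)
      = of_bool (near_chain L x bl) * (indicator A (fst y) * (of_bool (snd y < r) * \<phi> (snd y)))" for y
    by (auto simp: near_chain_snoc[OF bl(1)] A_def r_def)
  then have "(\<integral>\<^sup>+y. of_bool (near_chain L (x(j := y)) (bl @ [j])) * \<phi> (snd y) \<partial>point_law)
      = of_bool (near_chain L x bl) * (\<integral>\<^sup>+y. indicator A (fst y) * (of_bool (snd y < r) * \<phi> (snd y)) \<partial>point_law)"
    by (simp add: A_def nn_integral_cmult)
  also have "\<dots> \<le> of_bool (near_chain L x bl) * (ennreal (near_prob CARD('d) L (r + 1)) * marks_below_integral \<phi> r)"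
    unfolding A_def marks_below_integral_def
    by (intro mult_left_mono nn_integral_point_law_near_le) simp_all
  finally show ?thesis .
qed

lemma nn_integral_desc_marks_snoc:
  fixes x :: "nat \<Rightarrow> (real^'d::finite) \<times> real"
  assumes bl: "bl \<noteq> []" "j \<notin> set bl" and [measurable]: "\<phi> \<in> borel_measurable borel"
  defines "r \<equiv> snd (x (last bl))"
  shows "(\<integral>\<^sup>+y. of_bool (desc_marks (x(j := y)) (bl @ [j])) * chain_weight L (x(j := y)) (bl @ [j]) * \<phi> (snd y) \<partial>point_law)
    = of_bool (desc_marks x bl) * chain_weight L x bl * (ennreal (near_prob CARD('d) L (r + 1)) * marks_below_integral \<phi> r)"
proof -
  have m: "(\<lambda>y. of_bool (snd y < r) * \<phi> (snd y)) \<in> borel_measurable (point_law :: ((real^'d) \<times> real) measure)"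
    by measurable
  have "last bl \<noteq> j" using bl by auto
  moreover have "desc_marks (x(j := y)) bl = desc_marks x bl" for y
    by (rule desc_marks_cong) (use bl(2) in auto)
  moreover have "chain_weight L (x(j := y)) bl = chain_weight L x bl" for y
    by (rule chain_weight_cong) (use bl(2) in auto)
  ultimately have "of_bool (desc_marks (x(j := y)) (bl @ [j])) * chain_weight L (x(j := y)) (bl @ [j]) * \<phi> (snd y)
      = of_bool (desc_marks x bl) * chain_weight L x bl * ennreal (near_prob CARD('d) L (r + 1))
        * (of_bool (snd y < r) * \<phi> (snd y))" for y
    by (auto simp: desc_marks_snoc[OF bl(1)] chain_weight_snoc[OF bl(1)] r_def mult_ac)
  then have "(\<integral>\<^sup>+y. of_bool (desc_marks (x(j := y)) (bl @ [j])) * chain_weight L (x(j := y)) (bl @ [j]) * \<phi> (snd y) \<partial>point_law)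
      = of_bool (desc_marks x bl) * chain_weight L x bl * ennreal (near_prob CARD('d) L (r + 1))
        * (\<integral>\<^sup>+y. of_bool (snd y < r) * \<phi> (snd y) \<partial>(point_law :: ((real^'d) \<times> real) measure))"
    by (simp only: nn_integral_cmult[OF m])
  also have "\<dots> = of_bool (desc_marks x bl) * chain_weight L x bl
      * (ennreal (near_prob CARD('d) L (r + 1)) * marks_below_integral \<phi> r)"
    using nn_integral_point_law_mark[of "\<lambda>t. of_bool (t < r) * \<phi> t", where 'd='d]
    by (simp add: marks_below_integral_def mult_ac)
  finally show ?thesis .
qed

lemma product_sigma_finite_point_law:
  "product_sigma_finite (\<lambda>_::nat. point_law :: ((real^'d::finite) \<times> real) measure)"
  unfolding product_sigma_finite_def
  using prob_space_point_law by (auto intro: prob_space_imp_sigma_finite)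

text \<open>Integrating out the points of the chain from the last one backwards: each point contributes
  the probability of being near its predecessor.\<close>
lemma nn_integral_near_chain_le:
  fixes \<phi> :: "real \<Rightarrow> ennreal"
  assumes "finite I" "distinct js" "set js \<subseteq> I" "js \<noteq> []" "\<phi> \<in> borel_measurable borel"
  shows "(\<integral>\<^sup>+f. of_bool (near_chain L f js) * \<phi> (snd (f (last js)))
          \<partial>PiM I (\<lambda>_. point_law :: ((real^'d::finite) \<times> real) measure))
    \<le> (\<integral>\<^sup>+f. of_bool (desc_marks f js) * chain_weight L f js * \<phi> (snd (f (last js)))
          \<partial>PiM I (\<lambda>_. point_law :: ((real^'d) \<times> real) measure))"
  using assms
proof (induction js arbitrary: I \<phi> rule: rev_induct)
  case Nil
  then show ?case by simp
next
  case (snoc j bl)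
  show ?case
  proof (cases "bl = []")
    case True
    then show ?thesis by (simp add: near_chain_def desc_marks_def chain_weight_def)
  next
    case False
    interpret P: product_sigma_finite "\<lambda>_::nat. point_law :: ((real^'d) \<times> real) measure"
      by (rule product_sigma_finite_point_law)
    define I' where "I' = I - {j}"
    have I: "I = insert j I'" "j \<notin> I'" "finite I'" "set bl \<subseteq> I'"
      using snoc.prems by (auto simp: I'_def)
    have bl: "distinct bl" "j \<notin> set bl" using snoc.prems by auto
    let ?Q = "point_law :: ((real^'d) \<times> real) measure"
    let ?P = "PiM I' (\<lambda>_. ?Q)"
    note [measurable] = snoc.prems(5)
    define \<phi>' where "\<phi>' r = ennreal (near_prob CARD('d) L (r + 1)) * marks_below_integral \<phi> r" for r
    have [measurable]: "\<phi>' \<in> borel_measurable borel"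
      unfolding \<phi>'_def using borel_measurable_marks_below_integral[OF snoc.prems(5)] by measurable
    have chain_in_I: "set (bl @ [j]) \<subseteq> I" using I by auto
    have "(\<integral>\<^sup>+f. of_bool (near_chain L f (bl @ [j])) * \<phi> (snd (f (last (bl @ [j])))) \<partial>PiM I (\<lambda>_. ?Q))
        = (\<integral>\<^sup>+x. \<integral>\<^sup>+y. of_bool (near_chain L (x(j := y)) (bl @ [j])) * \<phi> (snd y) \<partial>?Q \<partial>?P)"
      using P.product_nn_integral_insert[OF I(3,2), unfolded I(1)[symmetric]] chain_in_I by simp
    also have "\<dots> \<le> (\<integral>\<^sup>+x. of_bool (near_chain L x bl) * \<phi>' (snd (x (last bl))) \<partial>?P)"
      unfolding \<phi>'_def using False bl by (intro nn_integral_mono nn_integral_near_chain_snoc_le) simp_all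
    also have "\<dots> \<le> (\<integral>\<^sup>+x. of_bool (desc_marks x bl) * chain_weight L x bl * \<phi>' (snd (x (last bl))) \<partial>?P)"
      using I bl False by (intro snoc.IH) simp_all
    also have "\<dots> = (\<integral>\<^sup>+x. \<integral>\<^sup>+y. of_bool (desc_marks (x(j := y)) (bl @ [j])) * chain_weight L (x(j := y)) (bl @ [j])
        * \<phi> (snd y) \<partial>?Q \<partial>?P)"
      unfolding \<phi>'_def using False bl by (intro nn_integral_cong) (simp add: nn_integral_desc_marks_snoc)
    also have "\<dots> = (\<integral>\<^sup>+f. of_bool (desc_marks f (bl @ [j])) * chain_weight L f (bl @ [j]) * \<phi> (snd (f (last (bl @ [j]))))
        \<partial>PiM I (\<lambda>_. ?Q))"
      using P.product_nn_integral_insert[OF I(3,2), unfolded I(1)[symmetric]] chain_in_I by simp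
    finally show ?thesis .
  qed
qed

end

lemma desc_marks_iff_sorted:
  "desc_marks f js \<longleftrightarrow> sorted_wrt (<) (map (\<lambda>j. - snd (f j)) js)"
proof -
  have "transp ((<) :: real \<Rightarrow> real \<Rightarrow> bool)" by (auto simp: transp_def)
  then show ?thesis
    by (simp add: desc_marks_def successively_map flip: successively_conv_sorted_wrt)
qed

lemma desc_marks_distinct: "desc_marks f js \<Longrightarrow> distinct js"
  by (auto simp: desc_marks_iff_sorted strict_sorted_iff distinct_map)

lemma desc_marks_inj:
  assumes "desc_marks f js1" "desc_marks f js2" "set js1 = set js2"
  shows "js1 = js2"
proof -
  let ?h = "\<lambda>j. - snd (f j)"
  have "map ?h js1 = map ?h js2"
    using assms by (intro strict_sorted_equal) (auto simp: desc_marks_iff_sorted)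
  moreover have "inj_on ?h (set js1 \<union> set js2)"
    using assms(1,3) by (auto simp: desc_marks_iff_sorted strict_sorted_iff distinct_map)
  ultimately show ?thesis by (simp add: inj_on_map_eq_map)
qed

lemma has_desc_chain_imp_near_chain:
  assumes "has_desc_chain L f k m" and "m0 \<le> m"
  obtains js where "distinct js" "set js \<subseteq> {..<k}" "length js = m0" "near_chain L f js"
proof -
  obtain js' where js': "length js' = m" "set js' \<subseteq> {..<k}"
    "successively (\<lambda>i j. snd (f j) < snd (f i) \<and> torus_dist L (fst (f i)) (fst (f j)) \<le> snd (f i)) js'"
    using assms(1) unfolding has_desc_chain_def successively_conv_nth by blast
  have "near_chain L f js'"
    unfolding near_chain_def using js'(3) by (rule successively_mono) (auto intro: torus_dist_le_imp_near)
  then have "near_chain L f (take m0 js' @ drop m0 js')" by simp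
  then have "near_chain L f (take m0 js')"
    unfolding near_chain_def successively_append_iff by blast
  moreover have "set (take m0 js') \<subseteq> {..<k}" using js'(2) set_take_subset by fast
  moreover have "length (take m0 js') = m0" using assms(2) js'(1) by simp
  ultimately show ?thesis
    by (intro that desc_marks_distinct[OF near_chain_imp_desc_marks])
qed

text \<open>The floor \<open>1 / L^d\<close> pays for the last point of a chain, whose own mark carries no
  factor in \<open>chain_weight\<close>.\<close>
definition mark_weight :: "nat \<Rightarrow> real \<Rightarrow> real \<Rightarrow> real" where
  "mark_weight d L r = max (near_prob d L (r + 1)) (1 / L^d)"

lemma borel_measurable_mark_weight[measurable]: "mark_weight d L \<in> borel_measurable borel"
  unfolding mark_weight_def by measurable

lemma chain_weight_le_prod_mark_weight:
  fixes f :: "nat \<Rightarrow> (real^'d::finite) \<times> real"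
  assumes "L > 0" "distinct js" "js \<noteq> []"
  shows "chain_weight L f js \<le> ennreal (L^CARD('d)) * (\<Prod>j\<in>set js. ennreal (mark_weight CARD('d) L (snd (f j))))"
proof -
  let ?w = "\<lambda>j. ennreal (mark_weight CARD('d) L (snd (f j)))"
  have "distinct (butlast js @ [last js])" using assms(2) by (simp only: append_butlast_last_id[OF assms(3)])
  moreover have "set js = set (butlast js @ [last js])" by (simp only: append_butlast_last_id[OF assms(3)])
  ultimately have js: "set js = insert (last js) (set (butlast js))" "last js \<notin> set (butlast js)"
    "distinct (butlast js)"
    by auto
  have "chain_weight L f js = (\<Prod>j\<in>set (butlast js). ennreal (near_prob CARD('d) L (snd (f j) + 1)))"
    using js(3) by (simp add: chain_weight_def prod.distinct_set_conv_list)
  also have "\<dots> \<le> (\<Prod>j\<in>set (butlast js). ?w j)"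
    by (intro prod_mono_ennreal ennreal_leI) (simp add: mark_weight_def)
  also have "\<dots> \<le> (ennreal (L^CARD('d)) * ?w (last js)) * (\<Prod>j\<in>set (butlast js). ?w j)"
  proof -
    have "1 = L^CARD('d) * (1 / L^CARD('d))" using assms(1) by simp
    also have "\<dots> \<le> L^CARD('d) * mark_weight CARD('d) L (snd (f (last js)))"
      using assms(1) unfolding mark_weight_def by (intro mult_left_mono) simp_all
    finally have "1 \<le> L^CARD('d) * mark_weight CARD('d) L (snd (f (last js)))" .
    then have "1 \<le> ennreal (L^CARD('d)) * ?w (last js)"
      using assms(1) by (simp add: ennreal_mult'[symmetric])
    then show ?thesis using mult_right_mono by fastforce
  qed
  also have "\<dots> = ennreal (L^CARD('d)) * (\<Prod>j\<in>set js. ?w j)"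
    using js(1,2) by (simp add: mult_ac)
  finally show ?thesis .
qed

lemma sum_desc_chain_weights_le:
  fixes f :: "nat \<Rightarrow> (real^'d::finite) \<times> real"
  assumes "L > 0" "m0 \<ge> 1"
  shows "(\<Sum>js\<in>{js. distinct js \<and> set js \<subseteq> {..<k} \<and> length js = m0}. of_bool (desc_marks f js) * chain_weight L f js)
    \<le> (\<Sum>S\<in>{S. S \<subseteq> {..<k} \<and> card S = m0}.
          ennreal (L^CARD('d)) * (\<Prod>j\<in>S. ennreal (mark_weight CARD('d) L (snd (f j)))))"
proof -
  define J where "J = {js. distinct js \<and> set js \<subseteq> {..<k} \<and> length js = m0}"
  define H where "H S = ennreal (L^CARD('d)) * (\<Prod>j\<in>S. ennreal (mark_weight CARD('d) L (snd (f j))))" for S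
  define A where "A = {js\<in>J. desc_marks f js}"
  have "finite J"
    by (rule finite_subset[OF _ finite_lists_length_eq[of "{..<k}" m0]]) (auto simp: J_def)
  have "(\<Sum>js\<in>J. of_bool (desc_marks f js) * chain_weight L f js)
      = (\<Sum>js\<in>J. if desc_marks f js then chain_weight L f js else 0)"
    by (intro sum.cong) auto
  also have "\<dots> = (\<Sum>js\<in>A. chain_weight L f js)"
    unfolding A_def using \<open>finite J\<close> by (simp add: sum.inter_filter)
  also have "\<dots> \<le> (\<Sum>js\<in>A. H (set js))"
    using assms by (intro sum_mono) (auto simp: A_def J_def H_def intro!: chain_weight_le_prod_mark_weight)
  also have "\<dots> = (\<Sum>S\<in>set ` A. H S)"
    by (rule sum.reindex[symmetric, unfolded comp_def]) (auto simp: inj_on_def A_def intro: desc_marks_inj)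
  also have "\<dots> \<le> (\<Sum>S\<in>{S. S \<subseteq> {..<k} \<and> card S = m0}. H S)"
    by (intro sum_mono2) (auto simp: A_def J_def distinct_card)
  finally show ?thesis unfolding J_def H_def .
qed

context marked_torus
begin

lemma nn_integral_prod_mark_weight:
  fixes S :: "nat set"
  assumes "S \<subseteq> {..<k}"
  shows "(\<integral>\<^sup>+f. (\<Prod>j\<in>S. ennreal (mark_weight CARD('d) L (snd (f j))))
      \<partial>PiM {..<k} (\<lambda>_. point_law :: ((real^'d::finite) \<times> real) measure))
    = (\<integral>\<^sup>+t. ennreal (mark_weight CARD('d) L t) \<partial>\<mu>) ^ card S"
proof -
  interpret P: product_sigma_finite "\<lambda>_::nat. point_law :: ((real^'d) \<times> real) measure"
    by (rule product_sigma_finite_point_law)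
  interpret marks: prob_space \<mu> by (rule prob_space_marks)
  let ?P = "PiM {..<k} (\<lambda>_. point_law :: ((real^'d) \<times> real) measure)"
  define G where "G i t = (if i \<in> S then ennreal (mark_weight CARD('d) L t) else 1)" for i t
  have [measurable]: "G i \<in> borel_measurable borel" for i unfolding G_def by measurable
  have "(\<Prod>j\<in>S. ennreal (mark_weight CARD('d) L (snd (f j)))) = (\<Prod>i<k. G i (snd (f i)))" for f :: "nat \<Rightarrow> (real^'d) \<times> real"
    using assms by (simp add: G_def prod.If_cases Int_absorb2 Int_commute)
  then have "(\<integral>\<^sup>+f. (\<Prod>j\<in>S. ennreal (mark_weight CARD('d) L (snd (f j)))) \<partial>?P)
      = (\<integral>\<^sup>+f. (\<Prod>i<k. G i (snd (f i))) \<partial>?P)"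
    by simp
  also have "\<dots> = (\<Prod>i<k. \<integral>\<^sup>+y. G i (snd y) \<partial>(point_law :: ((real^'d) \<times> real) measure))"
    by (rule P.product_nn_integral_prod) auto
  also have "\<dots> = (\<Prod>i<k. \<integral>\<^sup>+t. G i t \<partial>\<mu>)"
    by (intro prod.cong refl nn_integral_point_law_mark) measurable
  also have "\<dots> = (\<Prod>i<k. if i \<in> S then (\<integral>\<^sup>+t. ennreal (mark_weight CARD('d) L t) \<partial>\<mu>) else 1)"
    by (intro prod.cong refl) (simp add: G_def marks.emeasure_space_1)
  also have "\<dots> = (\<integral>\<^sup>+t. ennreal (mark_weight CARD('d) L t) \<partial>\<mu>) ^ card S"
    using assms by (simp add: prod.If_cases Int_absorb2 Int_commute)
  finally show ?thesis .
qed

lemma borel_measurable_prod_mark_weight: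
  assumes "S \<subseteq> I"
  shows "(\<lambda>f. \<Prod>j\<in>S. ennreal (mark_weight CARD('d) L (snd (f j))))
    \<in> borel_measurable (PiM I (\<lambda>_. point_law :: ((real^'d::finite) \<times> real) measure))"
proof (rule borel_measurable_prod_ennreal)
  fix j assume "j \<in> S"
  with assms have "j \<in> I" by auto
  note [measurable] = measurable_component_singleton[OF this, of "\<lambda>_. borel \<Otimes>\<^sub>M borel"]
  show "(\<lambda>f. ennreal (mark_weight CARD('d) L (snd (f j))))
      \<in> borel_measurable (PiM I (\<lambda>_. point_law :: ((real^'d) \<times> real) measure))"
    by measurable
qed

lemma nn_integral_sum_desc_chain_weights_le:
  fixes k :: nat
  assumes "m0 \<ge> 1"
  defines "P \<equiv> PiM {..<k} (\<lambda>_. point_law :: ((real^'d::finite) \<times> real) measure)"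
  shows "(\<integral>\<^sup>+f. (\<Sum>js\<in>{js. distinct js \<and> set js \<subseteq> {..<k} \<and> length js = m0}.
      of_bool (desc_marks f js) * chain_weight L f js) \<partial>P)
    \<le> of_nat (k choose m0) * ennreal (L^CARD('d)) * (\<integral>\<^sup>+t. ennreal (mark_weight CARD('d) L t) \<partial>\<mu>) ^ m0"
proof -
  define SS where "SS = {S. S \<subseteq> {..<k} \<and> card S = m0}"
  define H where "H f S = ennreal (L^CARD('d)) * (\<Prod>j\<in>S. ennreal (mark_weight CARD('d) L (snd (f j))))"
    for f :: "nat \<Rightarrow> (real^'d) \<times> real" and S
  have "finite SS" unfolding SS_def by (rule finite_subset[of _ "Pow {..<k}"]) auto
  have prod_measurable: "(\<lambda>f. \<Prod>j\<in>S. ennreal (mark_weight CARD('d) L (snd (f j)))) \<in> borel_measurable P"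
    if "S \<in> SS" for S
    using that unfolding P_def SS_def by (intro borel_measurable_prod_mark_weight) simp
  have "(\<integral>\<^sup>+f. (\<Sum>js\<in>{js. distinct js \<and> set js \<subseteq> {..<k} \<and> length js = m0}.
      of_bool (desc_marks f js) * chain_weight L f js) \<partial>P) \<le> (\<integral>\<^sup>+f. (\<Sum>S\<in>SS. H f S) \<partial>P)"
    using L_pos assms(1) unfolding SS_def H_def by (intro nn_integral_mono sum_desc_chain_weights_le)
  also have "\<dots> = (\<Sum>S\<in>SS. \<integral>\<^sup>+f. H f S \<partial>P)"
    using \<open>finite SS\<close> prod_measurable unfolding H_def by (intro nn_integral_sum) auto
  also have "\<dots> = (\<Sum>S\<in>SS. ennreal (L^CARD('d)) * (\<integral>\<^sup>+t. ennreal (mark_weight CARD('d) L t) \<partial>\<mu>) ^ m0)"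
    unfolding H_def using prod_measurable
    by (intro sum.cong refl) (simp add: nn_integral_cmult SS_def P_def nn_integral_prod_mark_weight)
  also have "\<dots> = of_nat (k choose m0) * ennreal (L^CARD('d)) * (\<integral>\<^sup>+t. ennreal (mark_weight CARD('d) L t) \<partial>\<mu>) ^ m0"
    by (simp add: SS_def n_subsets mult_ac)
  finally show ?thesis .
qed

lemma emeasure_near_chain_le:
  assumes "finite I" "distinct js" "set js \<subseteq> I" "js \<noteq> []"
  defines "P \<equiv> PiM I (\<lambda>_. point_law :: ((real^'d::finite) \<times> real) measure)"
  shows "emeasure P {f \<in> space P. near_chain L f js} \<le> (\<integral>\<^sup>+f. of_bool (desc_marks f js) * chain_weight L f js \<partial>P)"
proof -
  have "{f \<in> space P. near_chain L f js} \<in> sets P"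
    using pred_near_chain[OF assms(3)] by (simp add: P_def pred_def)
  then have "emeasure P {f \<in> space P. near_chain L f js} = (\<integral>\<^sup>+f. of_bool (near_chain L f js) * (\<lambda>_. 1) (snd (f (last js))) \<partial>P)"
    by (simp add: emeasure_Collect_eq_nn_integral_of_bool)
  also have "\<dots> \<le> (\<integral>\<^sup>+f. of_bool (desc_marks f js) * chain_weight L f js * (\<lambda>_. 1) (snd (f (last js))) \<partial>P)"
    unfolding P_def using assms by (intro nn_integral_near_chain_le) auto
  finally show ?thesis by simp
qed

lemma emeasure_long_chain_le:
  fixes k :: nat
  assumes "m0 \<ge> 1" and "\<And>m. x < real m \<Longrightarrow> m0 \<le> m"
  defines "P \<equiv> PiM {..<k} (\<lambda>_. point_law :: ((real^'d::finite) \<times> real) measure)"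
  shows "emeasure P {f \<in> space P. \<exists>m. real m > x \<and> has_desc_chain L f k m}
    \<le> of_nat (k choose m0) * ennreal (L^CARD('d)) * (\<integral>\<^sup>+t. ennreal (mark_weight CARD('d) L t) \<partial>\<mu>) ^ m0"
proof -
  define J where "J = {js. distinct js \<and> set js \<subseteq> {..<k} \<and> length js = m0}"
  have "finite J"
    by (rule finite_subset[OF _ finite_lists_length_eq[of "{..<k}" m0]]) (auto simp: J_def)
  have sets: "{f \<in> space P. near_chain L f js} \<in> sets P" if "js \<in> J" for js
    using pred_near_chain[of js "{..<k}"] that by (simp add: J_def P_def pred_def)
  have "{f \<in> space P. \<exists>m. real m > x \<and> has_desc_chain L f k m} \<subseteq> (\<Union>js\<in>J. {f \<in> space P. near_chain L f js})"
  proof safe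
    fix f m assume "f \<in> space P" "real m > x" "has_desc_chain L f k m"
    with assms(2) obtain js where "distinct js" "set js \<subseteq> {..<k}" "length js = m0" "near_chain L f js"
      using has_desc_chain_imp_near_chain by metis
    with \<open>f \<in> space P\<close> show "f \<in> (\<Union>js\<in>J. {f \<in> space P. near_chain L f js})"
      by (auto simp: J_def)
  qed
  then have "emeasure P {f \<in> space P. \<exists>m. real m > x \<and> has_desc_chain L f k m}
      \<le> emeasure P (\<Union>js\<in>J. {f \<in> space P. near_chain L f js})"
    using \<open>finite J\<close> sets by (intro emeasure_mono) auto
  also have "\<dots> \<le> (\<Sum>js\<in>J. emeasure P {f \<in> space P. near_chain L f js})"
    using \<open>finite J\<close> sets by (intro emeasure_subadditive_finite) auto
  also have "\<dots> \<le> (\<Sum>js\<in>J. \<integral>\<^sup>+f. of_bool (desc_marks f js) * chain_weight L f js \<partial>P)"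
    using assms(1) unfolding P_def by (intro sum_mono emeasure_near_chain_le) (auto simp: J_def)
  also have "\<dots> = (\<integral>\<^sup>+f. (\<Sum>js\<in>J. of_bool (desc_marks f js) * chain_weight L f js) \<partial>P)"
    using \<open>finite J\<close> by (intro nn_integral_sum[symmetric]) (auto simp: J_def P_def)
  also have "\<dots> \<le> of_nat (k choose m0) * ennreal (L^CARD('d)) * (\<integral>\<^sup>+t. ennreal (mark_weight CARD('d) L t) \<partial>\<mu>) ^ m0"
    unfolding J_def P_def by (rule nn_integral_sum_desc_chain_weights_le[OF assms(1)])
  finally show ?thesis .
qed

end

section \<open>The expected mark weight\<close>

text \<open>For \<open>t > h\<^sub>0\<close> take the largest \<open>j \<le> J\<close> with \<open>2^j h\<^sub>0 < t\<close>: then \<open>6 (t + 1) \<le> 24 \<cdot> 2^j h\<^sub>0\<close>,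
  unless \<open>j = J\<close>, where \<open>L \<le> 2^J\<close> bounds the minimum instead.\<close>
lemma min_power_le_dyadic_sum:
  fixes t L h0 :: real and d J :: nat
  assumes t: "t \<ge> 0" and h0: "h0 \<ge> 1" and L: "L > 0" "L \<le> 2^J"
  shows "min (L^d) ((6*(t+1))^d) \<le> (12*h0)^d + (\<Sum>j\<le>J. (24*2^j*h0)^d * indicator {2^j*h0<..} t)"
proof (cases "t \<le> h0")
  case True
  have "min (L^d) ((6*(t+1))^d) \<le> (12*h0)^d"
    using True t h0 by (intro min.coboundedI2 power_mono) auto
  moreover have "0 \<le> (\<Sum>j\<le>J. (24*2^j*h0)^d * indicator {2^j*h0<..} t)"
    using h0 by (intro sum_nonneg) auto
  ultimately show ?thesis by linarith
next
  case False
  define S where "S = {j. j \<le> J \<and> 2^j*h0 < t}"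
  have "finite S" "0 \<in> S" using False by (auto simp: S_def)
  define j where "j = Max S"
  have "j \<in> S" using \<open>finite S\<close> \<open>0 \<in> S\<close> unfolding j_def by (intro Max_in) auto
  then have jJ: "j \<le> J" and tj: "2^j*h0 < t" by (auto simp: S_def)
  have "min (L^d) ((6*(t+1))^d) \<le> (24*2^j*h0)^d"
  proof (cases "j = J")
    case True
    have "L \<le> 24*2^j*h0" using L(2) h0 True by (smt (verit) mult_le_cancel_left1 zero_less_power)
    then have "L^d \<le> (24*2^j*h0)^d" using L by (intro power_mono) auto
    then show ?thesis by (rule min.coboundedI1)
  next
    case False
    then have "Suc j \<notin> S"
      using Max_ge[OF \<open>finite S\<close>, of "Suc j"] unfolding j_def[symmetric] by auto
    then have "t \<le> 2^Suc j * h0" using jJ False by (auto simp: S_def)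
    moreover have "(1::real) * 1 \<le> 2^Suc j * h0"
      using h0 by (intro mult_mono) (auto simp del: power_Suc intro: one_le_power)
    ultimately have "6*(t+1) \<le> 24*2^j*h0" by simp
    then have "(6*(t+1))^d \<le> (24*2^j*h0)^d" using t by (intro power_mono) auto
    then show ?thesis by (rule min.coboundedI2)
  qed
  also have "\<dots> = (24*2^j*h0)^d * indicator {2^j*h0<..} t" using tj by simp
  also have "\<dots> \<le> (\<Sum>j\<le>J. (24*2^j*h0)^d * indicator {2^j*h0<..} t)"
    using jJ h0 by (intro member_le_sum) auto
  finally show ?thesis using h0 by (smt (verit) zero_le_power)
qed

lemma mark_weight_le_dyadic_sum:
  fixes t L h0 :: real and d J :: nat
  assumes t: "t \<ge> 0" and h0: "h0 \<ge> 1" and L: "L > 0" "L \<le> 2^J"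
  shows "mark_weight d L t
    \<le> (1 + (12*h0)^d) / L^d + (\<Sum>j\<le>J. ((24*2^j*h0)^d / L^d) * indicator {2^j*h0<..} t)"
proof -
  have Ld: "L^d > 0" using L by simp
  have "near_prob d L (t+1) = min (L^d) ((6*(t+1))^d) / L^d"
    unfolding near_prob_def using Ld L by (simp add: min_divide_distrib_right power_divide)
  then have "mark_weight d L t = max (min (L^d) ((6*(t+1))^d) / L^d) (1 / L^d)"
    by (simp add: mark_weight_def)
  also have "\<dots> \<le> (1 + min (L^d) ((6*(t+1))^d)) / L^d"
    using Ld t by (auto simp: max_def intro: divide_right_mono)
  also have "\<dots> \<le> (1 + ((12*h0)^d + (\<Sum>j\<le>J. (24*2^j*h0)^d * indicator {2^j*h0<..} t))) / L^d"
    using min_power_le_dyadic_sum[OF t h0 L] Ld by (intro divide_right_mono) auto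
  also have "\<dots> = (1 + (12*h0)^d) / L^d + (\<Sum>j\<le>J. ((24*2^j*h0)^d / L^d) * indicator {2^j*h0<..} t)"
    by (simp only: add_divide_distrib sum_divide_distrib times_divide_eq_left add.assoc)
  finally show ?thesis .
qed

lemma (in marked_torus) nn_integral_mark_weight_le:
  fixes h0 C :: real and d J :: nat
  assumes L: "L \<le> 2^J" and nonneg: "emeasure \<mu> {..<0} = 0" and h0: "h0 \<ge> 1" and C: "C \<ge> 0"
    and tail: "\<And>h. h \<ge> h0 \<Longrightarrow> measure \<mu> {h<..} \<le> C / h^d"
  shows "(\<integral>\<^sup>+t. ennreal (mark_weight d L t) \<partial>\<mu>) \<le> ennreal ((1 + (12*h0)^d + real (Suc J) * 24^d * C) / L^d)"
proof -
  interpret marks: prob_space \<mu> by (rule prob_space_marks)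
  have Ld: "L^d > 0" using L_pos by simp
  define a where "a j = (24*2^j*h0)^d / L^d" for j :: nat
  define c0 where "c0 = (1 + (12*h0)^d) / L^d"
  have sets[measurable]: "{h<..} \<in> sets \<mu>" for h :: real by (simp add: sets_marks)
  have "AE t in \<mu>. t \<notin> {..<0}"
    using nonneg by (intro AE_not_in) (simp add: null_sets_def sets_marks)
  then have bound: "AE t in \<mu>. mark_weight d L t \<le> c0 + (\<Sum>j\<le>J. a j * indicator {2^j*h0<..} t)"
    by eventually_elim (use mark_weight_le_dyadic_sum[OF _ h0 L_pos L] in \<open>auto simp: a_def c0_def\<close>)
  have w_nonneg: "0 \<le> mark_weight d L t" for t using Ld by (simp add: mark_weight_def le_max_iff_disj)
  have "norm (mark_weight d L t) \<le> max 1 (1 / L^d)" for t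
    using w_nonneg[of t] by (simp add: mark_weight_def near_prob_def)
  then have int_w: "integrable \<mu> (mark_weight d L)"
    by (intro marks.integrable_const_bound[where B="max 1 (1 / L^d)"] AE_I2) simp_all
  have int_indicator: "integrable \<mu> (indicator {h<..} :: real \<Rightarrow> real)" for h :: real
    by (simp add: marks.emeasure_finite sets_marks less_top[symmetric])
  have int_bound: "integrable \<mu> (\<lambda>t. c0 + (\<Sum>j\<le>J. a j * indicator {2^j*h0<..} t))"
    by (intro Bochner_Integration.integrable_add[OF marks.integrable_const]
        Bochner_Integration.integrable_sum Bochner_Integration.integrable_mult_right int_indicator)
  have "(\<integral>\<^sup>+t. ennreal (mark_weight d L t) \<partial>\<mu>) = ennreal (\<integral>t. mark_weight d L t \<partial>\<mu>)"
    using int_w w_nonneg by (intro nn_integral_eq_integral) auto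
  moreover have "(\<integral>t. mark_weight d L t \<partial>\<mu>) \<le> (\<integral>t. c0 + (\<Sum>j\<le>J. a j * indicator {2^j*h0<..} t) \<partial>\<mu>)"
    using bound int_w int_bound by (intro integral_mono_AE)
  also have "\<dots> = c0 + (\<Sum>j\<le>J. a j * measure \<mu> {2^j*h0<..})"
    using int_indicator int_bound
    by (simp add: integral_add integral_sum integrable_sum marks.prob_space sets_marks del: sum_mult_indicator)
  also have "\<dots> \<le> c0 + (\<Sum>j\<le>J. 24^d * C / L^d)"
  proof (intro add_left_mono sum_mono)
    fix j assume "j \<in> {..J}"
    have "a j * measure \<mu> {2^j*h0<..} \<le> a j * (C / (2^j*h0)^d)"
      using h0 Ld by (intro mult_left_mono tail) (auto simp: a_def)
    also have "\<dots> = 24^d * C / L^d"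
      unfolding a_def using h0 Ld by (simp add: power_mult_distrib field_simps)
    finally show "a j * measure \<mu> {2^j*h0<..} \<le> 24^d * C / L^d" .
  qed
  also have "\<dots> = (1 + (12*h0)^d + real (Suc J) * 24^d * C) / L^d"
    by (simp add: c0_def add_divide_distrib)
  finally show ?thesis by (simp add: ennreal_leI)
qed

lemma (in marked_torus) measure_long_chain_le:
  fixes k :: nat
  assumes "m0 \<ge> 1" and "\<And>m. x < real m \<Longrightarrow> m0 \<le> m"
    and "(\<integral>\<^sup>+t. ennreal (mark_weight CARD('d) L t) \<partial>\<mu>) \<le> ennreal X" and "X \<ge> 0"
  defines "P \<equiv> PiM {..<k} (\<lambda>_. point_law :: ((real^'d::finite) \<times> real) measure)"
  shows "measure P {f \<in> space P. \<exists>m. real m > x \<and> has_desc_chain L f k m} \<le> real (k choose m0) * (L^CARD('d) * X^m0)"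
proof -
  have "emeasure P {f \<in> space P. \<exists>m. real m > x \<and> has_desc_chain L f k m}
      \<le> of_nat (k choose m0) * ennreal (L^CARD('d)) * (\<integral>\<^sup>+t. ennreal (mark_weight CARD('d) L t) \<partial>\<mu>) ^ m0"
    unfolding P_def by (rule emeasure_long_chain_le[OF assms(1,2)])
  also have "\<dots> \<le> of_nat (k choose m0) * ennreal (L^CARD('d)) * ennreal X ^ m0"
    using assms(3) by (intro mult_left_mono power_mono_ennreal) auto
  also have "\<dots> = ennreal (real (k choose m0) * (L^CARD('d) * X^m0))"
    using L_pos assms(4) by (simp add: ennreal_power ennreal_mult' ennreal_of_nat_eq_real_of_nat mult_ac)
  finally show ?thesis
    using L_pos assms(4) by (simp add: measure_def enn2real_leI)
qed

lemma prob_long_chain_le: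
  assumes "marked_torus (real n) \<mu>" and "m0 \<ge> 1" and "\<And>m. c * ln (real n) < real m \<Longrightarrow> m0 \<le> m"
    and "(\<integral>\<^sup>+t. ennreal (mark_weight CARD('d) (real n) t) \<partial>\<mu>) \<le> ennreal X" and "X \<ge> 0"
  shows "0 \<le> prob_long_chain TYPE('d::finite) \<mu> n c"
    and "prob_long_chain TYPE('d) \<mu> n c \<le> real n ^ CARD('d) * (real n ^ CARD('d) * X) ^ m0 / fact m0"
proof -
  interpret marked_torus "real n" \<mu> by (fact assms(1))
  define lam where "lam = real n ^ CARD('d)"
  define p where "p k = exp (- lam) * lam ^ k / fact k *
    measure (PiM {..<k} (\<lambda>_. point_law :: ((real^'d) \<times> real) measure))
      {f \<in> space (PiM {..<k} (\<lambda>_. point_law :: ((real^'d) \<times> real) measure)).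
        \<exists>m. real m > c * ln (real n) \<and> has_desc_chain (real n) f k m}" for k
  define b where "b k = exp (- lam) * lam ^ k / fact k * real (k choose m0) * (lam * X^m0)" for k
  have p_nonneg: "0 \<le> p k" for k by (simp add: p_def lam_def)
  have "p k \<le> exp (- lam) * lam ^ k / fact k * (real (k choose m0) * (lam * X^m0))" for k
    unfolding p_def lam_def using assms by (intro mult_left_mono measure_long_chain_le) auto
  then have p_le: "p k \<le> b k" for k by (simp add: b_def mult.assoc)
  have "b sums (lam ^ m0 / fact m0 * (lam * X^m0))"
    unfolding b_def by (rule sums_mult2[OF poisson_binomial_moment_sums])
  then have "summable b" and sum_b: "suminf b = lam ^ m0 / fact m0 * (lam * X^m0)"
    by (simp_all add: sums_iff)
  have "summable p"
    by (rule summable_comparison_test'[OF \<open>summable b\<close>]) (use p_nonneg p_le in simp)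
  have "suminf p \<le> lam ^ m0 / fact m0 * (lam * X^m0)"
    unfolding sum_b[symmetric] using p_le \<open>summable p\<close> \<open>summable b\<close> by (intro suminf_le) auto
  moreover have "prob_long_chain TYPE('d) \<mu> n c = suminf p"
    unfolding prob_long_chain_def p_def lam_def ..
  moreover note \<open>summable p\<close>
  ultimately show "0 \<le> prob_long_chain TYPE('d) \<mu> n c"
    and "prob_long_chain TYPE('d) \<mu> n c \<le> real n ^ CARD('d) * (real n ^ CARD('d) * X) ^ m0 / fact m0"
    using p_nonneg by (auto simp: suminf_nonneg lam_def power_mult_distrib field_simps)
qed

lemma prob_long_chain_le_poly_log:
  fixes \<mu> :: "real measure" and h0 C c :: real and n m0 :: nat
  assumes "prob_space \<mu>" "sets \<mu> = sets borel" "emeasure \<mu> {..<0} = 0"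
    and h0: "h0 \<ge> 1" and C: "C \<ge> 0"
    and tail: "\<And>h. h \<ge> h0 \<Longrightarrow> measure \<mu> {h<..} \<le> C / h ^ CARD('d::finite)"
    and n: "n \<ge> 1" and m0: "m0 \<ge> 1" "\<And>m. c * ln (real n) < real m \<Longrightarrow> m0 \<le> m"
  defines "K \<equiv> 1 + (12*h0)^CARD('d) + 2 * 24^CARD('d) * C" and "B \<equiv> 24^CARD('d) * C / ln 2"
  shows "0 \<le> prob_long_chain TYPE('d) \<mu> n c"
    and "prob_long_chain TYPE('d) \<mu> n c \<le> real n ^ CARD('d) * (K + B * ln (real n)) ^ m0 / fact m0"
proof -
  define D where "D = CARD('d)"
  define L where "L = real n"
  define J where "J = nat \<lceil>log 2 L\<rceil>"
  have L: "L \<ge> 1" using n by (simp add: L_def)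
  interpret marked_torus L \<mu> by (intro marked_torus.intro) (use assms L in simp_all)
  define X where "X = (K + B * ln L) / L^D"
  have "0 \<le> K + B * ln L" using L h0 C by (simp add: K_def B_def)
  then have "X \<ge> 0" using L by (simp add: X_def)
  have "(\<integral>\<^sup>+t. ennreal (mark_weight D L t) \<partial>\<mu>) \<le> ennreal ((1 + (12*h0)^D + real (Suc J) * 24^D * C) / L^D)"
    using ceiling_log2_bounds(1)[OF L] assms(3) h0 C tail unfolding J_def D_def
    by (rule nn_integral_mark_weight_le)
  also have "\<dots> \<le> ennreal X"
    unfolding X_def
  proof (intro ennreal_leI divide_right_mono)
    have "real (Suc J) * (24^D * C) \<le> (ln L / ln 2 + 2) * (24^D * C)"
      using ceiling_log2_bounds(2)[OF L] C by (intro mult_right_mono) (auto simp: J_def)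
    then show "1 + (12*h0)^D + real (Suc J) * 24^D * C \<le> K + B * ln L"
      by (simp add: K_def B_def D_def algebra_simps)
  qed (use L in simp)
  finally have EG: "(\<integral>\<^sup>+t. ennreal (mark_weight CARD('d) (real n) t) \<partial>\<mu>) \<le> ennreal X"
    by (simp add: D_def L_def)
  have "L^D * X = K + B * ln L" using L by (simp add: X_def)
  then show "0 \<le> prob_long_chain TYPE('d) \<mu> n c"
    and "prob_long_chain TYPE('d) \<mu> n c \<le> real n ^ CARD('d) * (K + B * ln (real n)) ^ m0 / fact m0"
    using prob_long_chain_le[OF marked_torus_axioms[unfolded L_def] m0 EG \<open>X \<ge> 0\<close>]
    by (simp_all add: L_def D_def)
qed

theorem lemma5p3:
  fixes \<mu> :: "real measure" and \<beta> :: real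
  assumes "CARD('d::finite) \<ge> 2"
    and "prob_space \<mu>"
    and "sets \<mu> = sets borel"
    and "emeasure \<mu> {..<0} = 0"
    and "absolutely_continuous lborel \<mu>"
    and "\<beta> > 0"
    and "((\<lambda>h. h powr real CARD('d) * measure \<mu> {h<..}) \<longlongrightarrow> \<beta>) at_top"
  shows "\<exists>c1>0. (\<lambda>n. prob_long_chain TYPE('d) \<mu> n c1) \<longlonglongrightarrow> 0"
proof -
  define C where "C = \<bar>\<beta>\<bar> + 1"
  obtain h0 where h0: "h0 \<ge> 1" and tail: "\<And>h. h \<ge> h0 \<Longrightarrow> measure \<mu> {h<..} \<le> C / h ^ CARD('d)"
    using tail_le_of_tendsto[OF assms(7)] unfolding C_def by metis
  define K where "K = 1 + (12*h0)^CARD('d) + 2 * 24^CARD('d) * C"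
  define B where "B = 24^CARD('d) * C / ln 2"
  have "B > 0" by (simp add: B_def C_def)
  then obtain c where "c > 0" and ev: "\<forall>\<^sub>F n in sequentially. \<forall>m::nat. real m > c * ln (real n) \<longrightarrow>
      real n ^ CARD('d) * (K + B * ln (real n)) ^ m / fact m \<le> 1 / real n"
    using eventually_poly_log_power_div_fact_le by blast
  have "\<forall>\<^sub>F n in sequentially. 0 \<le> prob_long_chain TYPE('d) \<mu> n c \<and> prob_long_chain TYPE('d) \<mu> n c \<le> 1 / real n"
    using ev eventually_ge_at_top[of "1::nat"]
  proof eventually_elim
    case (elim n)
    define m0 where "m0 = nat \<lfloor>c * ln (real n)\<rfloor> + 1"
    have "0 \<le> c * ln (real n)" using \<open>c > 0\<close> elim(2) by simp
    note m0 = nat_floor_Suc_least_above[OF this, folded m0_def]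
    have "C \<ge> 0" "m0 \<ge> 1" by (simp_all add: C_def m0_def)
    note bounds = prob_long_chain_le_poly_log[OF assms(2-4) h0 this(1) tail elim(2) this(2) m0(2), folded K_def B_def]
    show ?case using bounds order.trans[OF bounds(2)] elim(1) m0(1) by blast
  qed
  then have "(\<lambda>n. prob_long_chain TYPE('d) \<mu> n c) \<longlonglongrightarrow> 0"
    by (intro tendsto_sandwich[OF _ _ tendsto_const lim_1_over_n]) (auto elim: eventually_mono)
  with \<open>c > 0\<close> show ?thesis by blast
qed

end
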